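(* Let $X$ and $Y$ be slices that are jointly spacelike (i.e. $X\cup Y$ is spacelike) and satisfy $X\cap Y=\varnothing$. Then the product and the coproduct of $X$ and $Y$ exist in $\mathsf{Slice}$, and both are given by the set-theoretic union $X\cup Y$.
   Context: Fix a connected, time-orientable Lorentzian manifold $\mathcal{M}$ with a fixed time-orientation (no further causality assumptions; closed timelike curves may exist). A causal curve is an equivalence class, up to monotone reparametrisation, of smooth regular paths $\mu:\iota\to\mathcal{M}$ ($\iota\subseteq\mathbb{R}$ an interval) whose tangent is everywhere timelike or null; it is future-directed if the tangent is everywhere future-directed. Write $x\prec y$ if $x=y$ or there is a future-directed causal curve from $x$ to $y$. A region $A\subseteq\mathcal{M}$ is spacelike if no two distinct points $x,y\in A$ satisfy $x\prec y$. A slice is a closed spacelike subset of $\mathcal{M}$; slices $X,Y$ are jointly spacelike if $X\cup Y$ is spacelike. For regions $A,B$, $\mathcal{C}[A,B]$ is the set of future-directed causal curves passing through $A$ and then $B$: for a representative path $\mu:\iota\to\mathcal{M}$, there exists $q\in\iota$ with $\mu(q)\in B$, and for every such $q$ there exists $p\le q$ with $\mu(p)\in A$. Write $\mathcal{C}[A]:=\mathcal{C}[A,A]$. The category $\mathsf{Slice}$ has slices as objects, $\mathsf{Slice}(X,Y)=\mathcal{P}(\mathcal{C}[X,Y])$ (the powerset), composition $T\circ S:=T\cap S$, and identities $1_X=\mathcal{C}[X,X]$. *)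

theory Defs
  imports "HOL-Analysis.Analysis"
begin

text \<open>f is C-infinity on S: there is a family of iterated directional derivatives
  D vs (vs = list of directions) with D [] = f on S and each D vs differentiable
  at every point of S (within S) with derivative v maps to D (v # vs).
  Differentiability to all orders implies continuity of all derivatives.\<close>
definition smooth_on :: "'a::real_normed_vector set \<Rightarrow> ('a \<Rightarrow> 'b::real_normed_vector) \<Rightarrow> bool" where
  "smooth_on S f \<longleftrightarrow> (\<exists>D :: 'a list \<Rightarrow> 'a \<Rightarrow> 'b.
      (\<forall>x\<in>S. D [] x = f x) \<and>
      (\<forall>vs. \<forall>x\<in>S. (D vs has_derivative (\<lambda>v. D (v # vs) x)) (at x within S)))"

type_synonym ('m, 'n) chart = "'m set \<times> ('m \<Rightarrow> real^'n)"

definition lorentz_sig :: "real^'n^'n \<Rightarrow> bool" where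
  "lorentz_sig M \<longleftrightarrow> transpose M = M \<and>
     (\<exists>(P::real^'n^'n) (i0::'n). invertible P \<and>
        transpose P ** M ** P = (\<chi> i j. if i = j then (if i = i0 then -1 else 1) else 0))"

text \<open>The Lorentzian metric is given in each chart c
  by the matrix G c p (coordinates of the chart c, at p in the chart domain); the
  fixed time orientation is given by a continuous timelike vector field whose
  coordinate expression in chart c at p is T c p.\<close>
definition lorentzian_manifold ::
  "('m::{t2_space, second_countable_topology}, 'n::finite) chart set \<Rightarrow>
   (('m, 'n) chart \<Rightarrow> 'm \<Rightarrow> real^'n^'n) \<Rightarrow> (('m, 'n) chart \<Rightarrow> 'm \<Rightarrow> real^'n) \<Rightarrow> bool" where
  "lorentzian_manifold A G T \<longleftrightarrow>
     CARD('n) \<ge> 2 \<and>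
     connected (UNIV :: 'm set) \<and>
     \<Union> (fst ` A) = UNIV \<and>
     (\<forall>(U, \<phi>)\<in>A. open U \<and> open (\<phi> ` U) \<and> (\<exists>\<psi>. homeomorphism U (\<phi> ` U) \<phi> \<psi>)) \<and>
     (\<forall>(U, \<phi>)\<in>A. \<forall>(V, \<psi>)\<in>A. smooth_on (\<phi> ` (U \<inter> V)) (\<psi> \<circ> inv_into U \<phi>)) \<and>
     (\<forall>c\<in>A. smooth_on (snd c ` fst c) (\<lambda>x. G c (inv_into (fst c) (snd c) x))) \<and>
     (\<forall>c\<in>A. \<forall>p\<in>fst c. lorentz_sig (G c p)) \<and>
     (\<forall>c\<in>A. continuous_on (snd c ` fst c) (\<lambda>x. T c (inv_into (fst c) (snd c) x))) \<and>
     (\<forall>c\<in>A. \<forall>p\<in>fst c. T c p \<bullet> (G c p *v T c p) < 0) \<and>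
     (\<forall>c\<in>A. \<forall>d\<in>A. \<forall>p\<in>fst c \<inter> fst d. \<forall>J.
        ((snd d \<circ> inv_into (fst c) (snd c)) has_derivative J) (at (snd c p)) \<longrightarrow>
          (\<forall>v w. v \<bullet> (G c p *v w) = J v \<bullet> (G d p *v J w)) \<and> J (T c p) = T d p)"

definition fd_causal_path ::
  "('m::topological_space, 'n::finite) chart set \<Rightarrow>
   (('m, 'n) chart \<Rightarrow> 'm \<Rightarrow> real^'n^'n) \<Rightarrow> (('m, 'n) chart \<Rightarrow> 'm \<Rightarrow> real^'n) \<Rightarrow>
   real set \<Rightarrow> (real \<Rightarrow> 'm) \<Rightarrow> bool" where
  "fd_causal_path A G T I \<mu> \<longleftrightarrow>
     is_interval I \<and> interior I \<noteq> {} \<and>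
     continuous_on I \<mu> \<and>
     (\<forall>c\<in>A. smooth_on (I \<inter> \<mu> -` fst c) (snd c \<circ> \<mu>)) \<and>
     (\<forall>c\<in>A. \<forall>t\<in>I. \<mu> t \<in> fst c \<longrightarrow>
        (\<forall>v. ((snd c \<circ> \<mu>) has_vector_derivative v) (at t within I) \<longrightarrow>
           v \<noteq> 0 \<and> v \<bullet> (G c (\<mu> t) *v v) \<le> 0 \<and> v \<bullet> (G c (\<mu> t) *v T c (\<mu> t)) < 0))"

definition reparam :: "real set \<times> (real \<Rightarrow> 'm) \<Rightarrow> real set \<times> (real \<Rightarrow> 'm) \<Rightarrow> bool" where
  "reparam P Q \<longleftrightarrow> (\<exists>h. bij_betw h (fst Q) (fst P) \<and> strict_mono_on (fst Q) h \<and>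
                         (\<forall>t\<in>fst Q. snd Q t = snd P (h t)))"

definition fd_curves ::
  "('m::topological_space, 'n::finite) chart set \<Rightarrow>
   (('m, 'n) chart \<Rightarrow> 'm \<Rightarrow> real^'n^'n) \<Rightarrow> (('m, 'n) chart \<Rightarrow> 'm \<Rightarrow> real^'n) \<Rightarrow>
   (real set \<times> (real \<Rightarrow> 'm)) set set" where
  "fd_curves A G T = {c. \<exists>I \<mu>. fd_causal_path A G T I \<mu> \<and>
      c = {(J, \<nu>). fd_causal_path A G T J \<nu> \<and> reparam (I, \<mu>) (J, \<nu>)}}"

definition cprec ::
  "('m::topological_space, 'n::finite) chart set \<Rightarrow>
   (('m, 'n) chart \<Rightarrow> 'm \<Rightarrow> real^'n^'n) \<Rightarrow> (('m, 'n) chart \<Rightarrow> 'm \<Rightarrow> real^'n) \<Rightarrow>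
   'm \<Rightarrow> 'm \<Rightarrow> bool" where
  "cprec A G T x y \<longleftrightarrow> x = y \<or>
     (\<exists>a b \<mu>. a < b \<and> fd_causal_path A G T {a..b} \<mu> \<and> \<mu> a = x \<and> \<mu> b = y)"

definition spacelike ::
  "('m::topological_space, 'n::finite) chart set \<Rightarrow>
   (('m, 'n) chart \<Rightarrow> 'm \<Rightarrow> real^'n^'n) \<Rightarrow> (('m, 'n) chart \<Rightarrow> 'm \<Rightarrow> real^'n) \<Rightarrow>
   'm set \<Rightarrow> bool" where
  "spacelike A G T S \<longleftrightarrow> (\<forall>x\<in>S. \<forall>y\<in>S. x \<noteq> y \<longrightarrow> \<not> cprec A G T x y)"

definition slice ::
  "('m::topological_space, 'n::finite) chart set \<Rightarrow>
   (('m, 'n) chart \<Rightarrow> 'm \<Rightarrow> real^'n^'n) \<Rightarrow> (('m, 'n) chart \<Rightarrow> 'm \<Rightarrow> real^'n) \<Rightarrow>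
   'm set \<Rightarrow> bool" where
  "slice A G T S \<longleftrightarrow> closed S \<and> spacelike A G T S"

definition CC ::
  "('m::topological_space, 'n::finite) chart set \<Rightarrow>
   (('m, 'n) chart \<Rightarrow> 'm \<Rightarrow> real^'n^'n) \<Rightarrow> (('m, 'n) chart \<Rightarrow> 'm \<Rightarrow> real^'n) \<Rightarrow>
   'm set \<Rightarrow> 'm set \<Rightarrow> (real set \<times> (real \<Rightarrow> 'm)) set set" where
  "CC A G T S1 S2 = {c \<in> fd_curves A G T. \<forall>(I, \<mu>)\<in>c.
      (\<exists>q\<in>I. \<mu> q \<in> S2) \<and> (\<forall>q\<in>I. \<mu> q \<in> S2 \<longrightarrow> (\<exists>p\<in>I. p \<le> q \<and> \<mu> p \<in> S1))}"

text \<open>Hom-sets: Slice(X,Y) = Pow (C[X,Y]); composition T o S = T \<inter> S; identity C[X,X].\<close>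
definition slice_hom ::
  "('m::topological_space, 'n::finite) chart set \<Rightarrow>
   (('m, 'n) chart \<Rightarrow> 'm \<Rightarrow> real^'n^'n) \<Rightarrow> (('m, 'n) chart \<Rightarrow> 'm \<Rightarrow> real^'n) \<Rightarrow>
   'm set \<Rightarrow> 'm set \<Rightarrow> (real set \<times> (real \<Rightarrow> 'm)) set set set" where
  "slice_hom A G T X Y = Pow (CC A G T X Y)"

definition slice_comp :: "'c set \<Rightarrow> 'c set \<Rightarrow> 'c set" where
  "slice_comp S2 S1 = S2 \<inter> S1"

definition is_slice_product ::
  "('m::topological_space, 'n::finite) chart set \<Rightarrow>
   (('m, 'n) chart \<Rightarrow> 'm \<Rightarrow> real^'n^'n) \<Rightarrow> (('m, 'n) chart \<Rightarrow> 'm \<Rightarrow> real^'n) \<Rightarrow>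
   'm set \<Rightarrow> 'm set \<Rightarrow> 'm set \<Rightarrow> bool" where
  "is_slice_product A G T X Y P \<longleftrightarrow> slice A G T P \<and>
     (\<exists>p1 \<in> slice_hom A G T P X. \<exists>p2 \<in> slice_hom A G T P Y.
        \<forall>Z. slice A G T Z \<longrightarrow>
          (\<forall>f \<in> slice_hom A G T Z X. \<forall>g \<in> slice_hom A G T Z Y.
             (\<exists>!h. h \<in> slice_hom A G T Z P \<and> slice_comp p1 h = f \<and> slice_comp p2 h = g)))"

definition is_slice_coproduct ::
  "('m::topological_space, 'n::finite) chart set \<Rightarrow>
   (('m, 'n) chart \<Rightarrow> 'm \<Rightarrow> real^'n^'n) \<Rightarrow> (('m, 'n) chart \<Rightarrow> 'm \<Rightarrow> real^'n) \<Rightarrow>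
   'm set \<Rightarrow> 'm set \<Rightarrow> 'm set \<Rightarrow> bool" where
  "is_slice_coproduct A G T X Y Q \<longleftrightarrow> slice A G T Q \<and>
     (\<exists>i1 \<in> slice_hom A G T X Q. \<exists>i2 \<in> slice_hom A G T Y Q.
        \<forall>Z. slice A G T Z \<longrightarrow>
          (\<forall>f \<in> slice_hom A G T X Z. \<forall>g \<in> slice_hom A G T Y Z.
             (\<exists>!h. h \<in> slice_hom A G T Q Z \<and> slice_comp h i1 = f \<and> slice_comp h i2 = g)))"

end

theory Submission
  imports Defs
begin

text \<open>Any two points of a future-directed causal path are causally related, so the path
  meets a spacelike set in at most one point. Hence, if \<open>X \<union> Y\<close> is spacelike and
  \<open>X \<inter> Y = {}\<close>, no causal curve meets both \<open>X\<close> and \<open>Y\<close>, and the curves meeting \<open>X \<union> Y\<close>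
  split disjointly into those meeting \<open>X\<close> and those meeting \<open>Y\<close>. These two families are the
  projections and the injections. Every morphism into or out of \<open>X \<union> Y\<close> consists of such
  curves, so it is the disjoint union of its intersections with the two families, and these
  intersections are exactly the given morphisms into or out of \<open>X\<close> and \<open>Y\<close>.\<close>

lemma smooth_on_subset:
  assumes "smooth_on S f" and "S' \<subseteq> S"
  shows "smooth_on S' f"
proof -
  obtain D where "\<forall>x\<in>S. D [] x = f x"
    and "\<forall>vs. \<forall>x\<in>S. (D vs has_derivative (\<lambda>v. D (v # vs) x)) (at x within S)"
    using assms(1) unfolding smooth_on_def by blast
  with assms(2) show ?thesis
    unfolding smooth_on_def by (blast intro: has_derivative_subset)
qed

lemma smooth_on_differentiable:
  assumes "smooth_on S f" and "x \<in> S"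
  shows "f differentiable (at x within S)"
proof -
  obtain D where D0: "\<forall>x\<in>S. D [] x = f x"
    and D: "\<forall>vs. \<forall>x\<in>S. (D vs has_derivative (\<lambda>v. D (v # vs) x)) (at x within S)"
    using assms(1) unfolding smooth_on_def by blast
  have "(f has_derivative (\<lambda>v. D [v] x)) (at x within S)"
    by (rule has_derivative_transform_within[OF D[rule_format, OF assms(2), of "[]"]
          zero_less_one assms(2)]) (use D0 in auto)
  then show ?thesis
    by (rule differentiableI)
qed

lemma at_within_Int_vimage_open:
  assumes "continuous_on I \<mu>" and "open U" and "t \<in> I" and "\<mu> t \<in> U"
  shows "at t within (I \<inter> \<mu> -` U) = at t within I"
proof -
  obtain V where "open V" and V: "V \<inter> I = \<mu> -` U \<inter> I"
    using assms(1,2) unfolding continuous_on_open_invariant by blast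
  moreover have "t \<in> V"
    using V assms(3,4) by blast
  ultimately show ?thesis
    by (intro at_within_nhd[of t V]) auto
qed

lemma lorentzian_manifold_open_chart:
  assumes "lorentzian_manifold A G T" and "c \<in> A"
  shows "open (fst c)"
  using assms unfolding lorentzian_manifold_def by auto

lemma fd_causal_path_differentiable:
  assumes "fd_causal_path A G T I \<mu>" and "c \<in> A" and "open (fst c)"
    and "t \<in> I" and "\<mu> t \<in> fst c"
  shows "(snd c \<circ> \<mu>) differentiable (at t within I)"
proof -
  have "smooth_on (I \<inter> \<mu> -` fst c) (snd c \<circ> \<mu>)" and "continuous_on I \<mu>"
    using assms(1,2) unfolding fd_causal_path_def by auto
  with assms(3-5) show ?thesis
    using smooth_on_differentiable at_within_Int_vimage_open by fastforce
qed

lemma fd_causal_path_restrict: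
  assumes "lorentzian_manifold A G T" and P: "fd_causal_path A G T I \<mu>"
    and "s \<in> I" and "t \<in> I" and "s < t"
  shows "fd_causal_path A G T {s..t} \<mu>"
proof -
  have "is_interval I"
    using P unfolding fd_causal_path_def by blast
  then have sub: "{s..t} \<subseteq> I"
    using mem_is_interval_1_I[OF _ assms(3,4)] by auto
  have causal: "\<forall>c\<in>A. \<forall>\<tau>\<in>I. \<mu> \<tau> \<in> fst c \<longrightarrow>
      (\<forall>v. ((snd c \<circ> \<mu>) has_vector_derivative v) (at \<tau> within I) \<longrightarrow>
        v \<noteq> 0 \<and> v \<bullet> (G c (\<mu> \<tau>) *v v) \<le> 0 \<and> v \<bullet> (G c (\<mu> \<tau>) *v T c (\<mu> \<tau>)) < 0)"
    using P unfolding fd_causal_path_def by blast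
  have "v \<noteq> 0 \<and> v \<bullet> (G c (\<mu> \<tau>) *v v) \<le> 0 \<and> v \<bullet> (G c (\<mu> \<tau>) *v T c (\<mu> \<tau>)) < 0"
    if c: "c \<in> A" and \<tau>: "\<tau> \<in> {s..t}" and \<mu>\<tau>: "\<mu> \<tau> \<in> fst c"
      and v: "((snd c \<circ> \<mu>) has_vector_derivative v) (at \<tau> within {s..t})" for c \<tau> v
  proof -
    have "\<tau> \<in> I"
      using \<tau> sub by blast
    define w where "w = vector_derivative (snd c \<circ> \<mu>) (at \<tau> within I)"
    have w: "((snd c \<circ> \<mu>) has_vector_derivative w) (at \<tau> within I)"
      unfolding w_def vector_derivative_works[symmetric]
      by (rule fd_causal_path_differentiable[OF P c lorentzian_manifold_open_chart[OF assms(1) c]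
            \<open>\<tau> \<in> I\<close> \<mu>\<tau>])
    \<comment> \<open>derivatives within a nondegenerate closed interval are unique, also at its endpoints\<close>
    have "v = w"
      using vector_derivative_unique_within_closed_interval[OF assms(5), of \<tau> _ v w]
        has_vector_derivative_within_subset[OF w sub] v \<tau> by simp
    then show ?thesis
      using causal c \<open>\<tau> \<in> I\<close> \<mu>\<tau> w by blast
  qed
  moreover have "\<forall>c\<in>A. smooth_on ({s..t} \<inter> \<mu> -` fst c) (snd c \<circ> \<mu>)"
    using P sub smooth_on_subset unfolding fd_causal_path_def by (metis Int_mono order_refl)
  moreover have "continuous_on {s..t} \<mu>"
    using P sub continuous_on_subset unfolding fd_causal_path_def by blast
  ultimately show ?thesis
    unfolding fd_causal_path_def using assms(5) by simp
qed

lemma cprec_fd_causal_path: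
  assumes "lorentzian_manifold A G T" and "fd_causal_path A G T I \<mu>"
    and "p \<in> I" and "q \<in> I" and "p \<le> q"
  shows "cprec A G T (\<mu> p) (\<mu> q)"
proof (cases "p = q")
  case False
  with assms(5) have "p < q"
    by simp
  with fd_causal_path_restrict[OF assms(1-4)] show ?thesis
    unfolding cprec_def by blast
qed (simp add: cprec_def)

lemma fd_causal_path_meets_spacelike_once:
  assumes "lorentzian_manifold A G T" and "spacelike A G T S"
    and "fd_causal_path A G T I \<mu>"
    and "p \<in> I" and "\<mu> p \<in> S" and "q \<in> I" and "\<mu> q \<in> S"
  shows "\<mu> p = \<mu> q"
proof -
  have "cprec A G T (\<mu> p) (\<mu> q) \<or> cprec A G T (\<mu> q) (\<mu> p)"
    using cprec_fd_causal_path[OF assms(1,3)] assms(4,6) by (meson linear)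
  with assms(2,5,7) show ?thesis
    unfolding spacelike_def by metis
qed

lemma fd_curves_fd_causal_path:
  assumes "c \<in> fd_curves A G T" and "(I, \<mu>) \<in> c"
  shows "fd_causal_path A G T I \<mu>"
  using assms unfolding fd_curves_def by auto

lemma fd_curves_ex_representative:
  assumes "c \<in> fd_curves A G T"
  obtains I \<mu> where "(I, \<mu>) \<in> c"
proof -
  obtain I \<mu> where "fd_causal_path A G T I \<mu>"
    and c: "c = {(J, \<nu>). fd_causal_path A G T J \<nu> \<and> reparam (I, \<mu>) (J, \<nu>)}"
    using assms unfolding fd_curves_def by blast
  moreover have "reparam (I, \<mu>) (I, \<mu>)"
    unfolding reparam_def by (intro exI[of _ id]) (auto simp: strict_mono_on_def)
  ultimately show ?thesis
    using that by blast
qed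

lemma reparam_image_eq:
  assumes "reparam (I, \<mu>) (J, \<nu>)"
  shows "\<nu> ` J = \<mu> ` I"
proof -
  obtain h where "bij_betw h J I" and "\<forall>t\<in>J. \<nu> t = \<mu> (h t)"
    using assms unfolding reparam_def by auto
  then show ?thesis
    by (metis bij_betw_imp_surj_on image_comp image_cong comp_apply)
qed

lemma fd_curves_image_eq:
  assumes "c \<in> fd_curves A G T" and "(I, \<mu>) \<in> c" and "(J, \<nu>) \<in> c"
  shows "\<mu> ` I = \<nu> ` J"
proof -
  obtain I0 \<mu>0 where "c = {(J, \<nu>). fd_causal_path A G T J \<nu> \<and> reparam (I0, \<mu>0) (J, \<nu>)}"
    using assms(1) unfolding fd_curves_def by blast
  with assms(2,3) have "reparam (I0, \<mu>0) (I, \<mu>)" and "reparam (I0, \<mu>0) (J, \<nu>)"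
    by auto
  then show ?thesis
    by (simp add: reparam_image_eq)
qed

lemma fd_causal_path_Un_points_in_first:
  assumes "lorentzian_manifold A G T" and "spacelike A G T (X \<union> Y)"
    and "fd_causal_path A G T I \<mu>" and "p \<in> I" and "\<mu> p \<in> X"
    and "q \<in> I" and "\<mu> q \<in> X \<union> Y"
  shows "\<mu> q \<in> X"
  using fd_causal_path_meets_spacelike_once[OF assms(1-4) _ assms(6,7)] assms(5) by auto

definition curves_meeting ::
  "('m::topological_space, 'n::finite) chart set \<Rightarrow>
   (('m, 'n) chart \<Rightarrow> 'm \<Rightarrow> real^'n^'n) \<Rightarrow> (('m, 'n) chart \<Rightarrow> 'm \<Rightarrow> real^'n) \<Rightarrow>
   'm set \<Rightarrow> (real set \<times> (real \<Rightarrow> 'm)) set set" where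
  "curves_meeting A G T S = {c \<in> fd_curves A G T. \<forall>(I, \<mu>)\<in>c. \<exists>q\<in>I. \<mu> q \<in> S}"

lemma curves_meetingI:
  assumes "c \<in> fd_curves A G T" and "(I, \<mu>) \<in> c" and "q \<in> I" and "\<mu> q \<in> S"
  shows "c \<in> curves_meeting A G T S"
proof -
  have "\<exists>q'\<in>J. \<nu> q' \<in> S" if "(J, \<nu>) \<in> c" for J \<nu>
  proof -
    have "\<mu> q \<in> \<nu> ` J"
      using fd_curves_image_eq[OF assms(1,2) that] assms(3) by blast
    with assms(4) show ?thesis
      by auto
  qed
  with assms(1) show ?thesis
    unfolding curves_meeting_def by blast
qed

lemma curves_meeting_Un:
  "curves_meeting A G T (X \<union> Y) = curves_meeting A G T X \<union> curves_meeting A G T Y"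
proof
  show "curves_meeting A G T (X \<union> Y) \<subseteq> curves_meeting A G T X \<union> curves_meeting A G T Y"
  proof
    fix c assume c: "c \<in> curves_meeting A G T (X \<union> Y)"
    then have "c \<in> fd_curves A G T"
      unfolding curves_meeting_def by blast
    moreover obtain I \<mu> where "(I, \<mu>) \<in> c"
      using fd_curves_ex_representative[OF \<open>c \<in> fd_curves A G T\<close>] .
    moreover obtain q where "q \<in> I" and "\<mu> q \<in> X \<union> Y"
      using c \<open>(I, \<mu>) \<in> c\<close> unfolding curves_meeting_def by blast
    ultimately show "c \<in> curves_meeting A G T X \<union> curves_meeting A G T Y"
      using curves_meetingI by (metis Un_iff)
  qed
qed (auto simp: curves_meeting_def)

lemma curves_meeting_disjoint:
  assumes "lorentzian_manifold A G T" and "spacelike A G T (X \<union> Y)" and "X \<inter> Y = {}"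
  shows "curves_meeting A G T X \<inter> curves_meeting A G T Y = {}"
proof (rule ccontr)
  assume "curves_meeting A G T X \<inter> curves_meeting A G T Y \<noteq> {}"
  then obtain c where cX: "c \<in> curves_meeting A G T X" and cY: "c \<in> curves_meeting A G T Y"
    by blast
  then have c: "c \<in> fd_curves A G T"
    unfolding curves_meeting_def by blast
  obtain I \<mu> where e: "(I, \<mu>) \<in> c"
    using fd_curves_ex_representative[OF c] .
  obtain p q where "p \<in> I" "\<mu> p \<in> X" "q \<in> I" "\<mu> q \<in> Y"
    using cX cY e unfolding curves_meeting_def by blast
  with fd_causal_path_meets_spacelike_once[OF assms(1,2) fd_curves_fd_causal_path[OF c e]]
  have "\<mu> p = \<mu> q"
    by blast
  with \<open>\<mu> p \<in> X\<close> \<open>\<mu> q \<in> Y\<close> assms(3) show False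
    by auto
qed

lemma CC_subset_curves_meeting_source: "CC A G T S1 S2 \<subseteq> curves_meeting A G T S1"
  unfolding CC_def curves_meeting_def by fastforce

lemma CC_subset_curves_meeting_target: "CC A G T S1 S2 \<subseteq> curves_meeting A G T S2"
  unfolding CC_def curves_meeting_def by auto

lemma CC_eq_curves_meeting:
  assumes "S2 \<subseteq> S1"
  shows "CC A G T S1 S2 = curves_meeting A G T S2"
  using assms unfolding CC_def curves_meeting_def by fastforce

lemma CC_mono_source:
  assumes "S1 \<subseteq> S1'"
  shows "CC A G T S1 S2 \<subseteq> CC A G T S1' S2"
  using assms unfolding CC_def by fastforce

lemma CC_subset_CC_Un_target:
  assumes "lorentzian_manifold A G T" and "spacelike A G T (X \<union> Y)"
  shows "CC A G T Z X \<subseteq> CC A G T Z (X \<union> Y)"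
proof
  fix c assume c: "c \<in> CC A G T Z X"
  then have cf: "c \<in> fd_curves A G T"
    unfolding CC_def by blast
  have "(\<exists>q\<in>I. \<mu> q \<in> X \<union> Y) \<and> (\<forall>q\<in>I. \<mu> q \<in> X \<union> Y \<longrightarrow> (\<exists>p\<in>I. p \<le> q \<and> \<mu> p \<in> Z))"
    if e: "(I, \<mu>) \<in> c" for I \<mu>
  proof -
    have through: "(\<exists>q\<in>I. \<mu> q \<in> X) \<and> (\<forall>q\<in>I. \<mu> q \<in> X \<longrightarrow> (\<exists>p\<in>I. p \<le> q \<and> \<mu> p \<in> Z))"
      using c e unfolding CC_def by auto
    with fd_causal_path_Un_points_in_first[OF assms fd_curves_fd_causal_path[OF cf e]]
    have "\<forall>q\<in>I. \<mu> q \<in> X \<union> Y \<longrightarrow> \<mu> q \<in> X"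
      by blast
    with through show ?thesis
      by blast
  qed
  with cf show "c \<in> CC A G T Z (X \<union> Y)"
    unfolding CC_def by blast
qed

lemma curves_meeting_subset_CC_Un:
  assumes "lorentzian_manifold A G T" and "spacelike A G T (X \<union> Y)"
  shows "curves_meeting A G T X \<subseteq> CC A G T X (X \<union> Y)"
proof
  fix c assume c: "c \<in> curves_meeting A G T X"
  then have cf: "c \<in> fd_curves A G T"
    unfolding curves_meeting_def by blast
  have "(\<exists>q\<in>I. \<mu> q \<in> X \<union> Y) \<and> (\<forall>q\<in>I. \<mu> q \<in> X \<union> Y \<longrightarrow> (\<exists>p\<in>I. p \<le> q \<and> \<mu> p \<in> X))"
    if e: "(I, \<mu>) \<in> c" for I \<mu>
  proof -
    obtain p where "p \<in> I" and "\<mu> p \<in> X"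
      using c e unfolding curves_meeting_def by blast
    with fd_causal_path_Un_points_in_first[OF assms fd_curves_fd_causal_path[OF cf e]]
    show ?thesis
      by blast
  qed
  with cf show "c \<in> CC A G T X (X \<union> Y)"
    unfolding CC_def by blast
qed

lemma ex1_subset_with_given_traces:
  assumes "HX \<inter> HY = {}" and "H \<subseteq> HX \<union> HY"
    and "f \<subseteq> HX" and "g \<subseteq> HY" and "f \<union> g \<subseteq> H"
  shows "\<exists>!h. h \<in> Pow H \<and> HX \<inter> h = f \<and> HY \<inter> h = g"
proof (rule ex1I[of _ "f \<union> g"])
  show "f \<union> g \<in> Pow H \<and> HX \<inter> (f \<union> g) = f \<and> HY \<inter> (f \<union> g) = g"
    using assms by blast
next
  fix h assume "h \<in> Pow H \<and> HX \<inter> h = f \<and> HY \<inter> h = g"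
  with assms(2) show "h = f \<union> g"
    by blast
qed

lemma slice_Un:
  assumes "slice A G T X" and "slice A G T Y" and "spacelike A G T (X \<union> Y)"
  shows "slice A G T (X \<union> Y)"
  using assms unfolding slice_def by (simp add: closed_Un)

lemma is_slice_product_Un:
  assumes lm: "lorentzian_manifold A G T" and "slice A G T X" and "slice A G T Y"
    and sp: "spacelike A G T (X \<union> Y)" and dj: "X \<inter> Y = {}"
  shows "is_slice_product A G T X Y (X \<union> Y)"
proof -
  let ?HX = "curves_meeting A G T X" and ?HY = "curves_meeting A G T Y"
  have YX: "Y \<union> X = X \<union> Y"
    by blast
  note sp' = sp[folded YX]
  have "?HX \<in> slice_hom A G T (X \<union> Y) X" and "?HY \<in> slice_hom A G T (X \<union> Y) Y"
    unfolding slice_hom_def by (simp_all add: CC_eq_curves_meeting)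
  moreover have "\<exists>!h. h \<in> slice_hom A G T Z (X \<union> Y) \<and> slice_comp ?HX h = f \<and> slice_comp ?HY h = g"
    if f: "f \<in> slice_hom A G T Z X" and g: "g \<in> slice_hom A G T Z Y" for Z f g
  proof -
    have "CC A G T Z (X \<union> Y) \<subseteq> ?HX \<union> ?HY"
      using CC_subset_curves_meeting_target curves_meeting_Un by blast
    moreover have "f \<subseteq> ?HX" and "g \<subseteq> ?HY"
      using f g CC_subset_curves_meeting_target unfolding slice_hom_def by blast+
    moreover have "f \<union> g \<subseteq> CC A G T Z (X \<union> Y)"
      using f g CC_subset_CC_Un_target[OF lm sp] CC_subset_CC_Un_target[OF lm sp', unfolded YX]
      unfolding slice_hom_def by blast
    ultimately show ?thesis
      unfolding slice_hom_def slice_comp_def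
      by (intro ex1_subset_with_given_traces curves_meeting_disjoint[OF lm sp dj])
  qed
  ultimately show ?thesis
    unfolding is_slice_product_def
    by (intro conjI slice_Un[OF assms(2-4)] bexI[of _ ?HX] bexI[of _ ?HY] allI impI ballI)
qed

lemma is_slice_coproduct_Un:
  assumes lm: "lorentzian_manifold A G T" and "slice A G T X" and "slice A G T Y"
    and sp: "spacelike A G T (X \<union> Y)" and dj: "X \<inter> Y = {}"
  shows "is_slice_coproduct A G T X Y (X \<union> Y)"
proof -
  let ?HX = "curves_meeting A G T X" and ?HY = "curves_meeting A G T Y"
  have YX: "Y \<union> X = X \<union> Y"
    by blast
  note sp' = sp[folded YX]
  have "?HX \<in> slice_hom A G T X (X \<union> Y)" and "?HY \<in> slice_hom A G T Y (X \<union> Y)"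
    unfolding slice_hom_def
    using curves_meeting_subset_CC_Un[OF lm sp] curves_meeting_subset_CC_Un[OF lm sp', unfolded YX]
    by blast+
  moreover have "\<exists>!h. h \<in> slice_hom A G T (X \<union> Y) Z \<and> slice_comp h ?HX = f \<and> slice_comp h ?HY = g"
    if f: "f \<in> slice_hom A G T X Z" and g: "g \<in> slice_hom A G T Y Z" for Z f g
  proof -
    have "CC A G T (X \<union> Y) Z \<subseteq> ?HX \<union> ?HY"
      using CC_subset_curves_meeting_source curves_meeting_Un by blast
    moreover have "f \<subseteq> ?HX" and "g \<subseteq> ?HY"
      using f g CC_subset_curves_meeting_source unfolding slice_hom_def by blast+
    moreover have "f \<union> g \<subseteq> CC A G T (X \<union> Y) Z"
      using f g CC_mono_source[of X "X \<union> Y"] CC_mono_source[of Y "X \<union> Y"]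
      unfolding slice_hom_def by blast
    ultimately show ?thesis
      unfolding slice_hom_def slice_comp_def Int_commute[of _ ?HX] Int_commute[of _ ?HY]
      by (intro ex1_subset_with_given_traces curves_meeting_disjoint[OF lm sp dj])
  qed
  ultimately show ?thesis
    unfolding is_slice_coproduct_def
    by (intro conjI slice_Un[OF assms(2-4)] bexI[of _ ?HX] bexI[of _ ?HY] allI impI ballI)
qed

theorem mainTheorem2:
  fixes A :: "('m::{t2_space, second_countable_topology}, 'n::finite) chart set"
    and G :: "('m, 'n) chart \<Rightarrow> 'm \<Rightarrow> real^'n^'n"
    and T :: "('m, 'n) chart \<Rightarrow> 'm \<Rightarrow> real^'n"
    and X Y :: "'m set"
  assumes "lorentzian_manifold A G T"
    and "slice A G T X" and "slice A G T Y"
    and "spacelike A G T (X \<union> Y)"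
    and "X \<inter> Y = {}"
  shows "is_slice_product A G T X Y (X \<union> Y) \<and> is_slice_coproduct A G T X Y (X \<union> Y)"
  using is_slice_product_Un[OF assms] is_slice_coproduct_Un[OF assms] by blast

end
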